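(* Let $(l_n)$ and $(i_n)$ be integer sequences with $1\le l_n\le n$ and $1\le i_n\le n$, such that $l_n/n\to t\in(0,1]$ and $i_n/n\to x\in[0,1]$ with $t\ne x$. Then $$C(n,l_n,i_n)\longrightarrow C(t,x)\qquad(n\to\infty).$$
   Context: Let $H_j=\sum_{i=1}^j1/i$, $a(0,0)=0$ and $a(n,l)=2n+2(n+1)H_n-2(n+3-l)H_{n+1-l}-6l+6$ for $1\le l\le n$ (this is the expected number of comparisons of Quicksort on the fly on $n$ items until the $l$-th smallest is found). For $n\ge1$, $1\le i\le n$ and $1\le l\le n$, $C(n,l,i)=\frac1n\Big(n-1-a(n,l)+\mathbf 1_{l<i}\,a(i-1,l)+\mathbf 1_{l\ge i}\,a(i-1,i-1)+\mathbf 1_{l>i}\,a(n-i,l-i)\Big)$. $C(x)=1+2x\ln x+2(1-x)\ln(1-x)$ for $x\in[0,1]$ (with $0\ln0=0$) and $C(t,x)=C(x)+2\,\mathbf 1_{t<x}\big(-1+x+(1-t)\ln(1-t)-(1-x)\ln(1-x)-(x-t)\ln(x-t)\big)$ for $t,x\in[0,1]$. *)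

theory Defs
  imports "HOL-Analysis.Analysis"
begin

definition H :: "nat \<Rightarrow> real" where
  "H j = (\<Sum>k=1..j. 1 / real k)"

text \<open>a(0,0) = 0; for 1 <= l <= n the explicit formula (other arguments never used).\<close>
definition qa :: "nat \<Rightarrow> nat \<Rightarrow> real" where
  "qa n l = (if l = 0 then 0 else
     2 * real n + 2 * (real n + 1) * H n
     - 2 * (real n + 3 - real l) * H (n + 1 - l) - 6 * real l + 6)"

definition Cd :: "nat \<Rightarrow> nat \<Rightarrow> nat \<Rightarrow> real" where
  "Cd n l i = (1 / real n) * (real n - 1 - qa n l
      + (if l < i then qa (i - 1) l else 0)
      + (if l \<ge> i then qa (i - 1) (i - 1) else 0)
      + (if l > i then qa (n - i) (l - i) else 0))"

definition xlnx :: "real \<Rightarrow> real" where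
  "xlnx x = (if x = 0 then 0 else x * ln x)"

definition Cx :: "real \<Rightarrow> real" where
  "Cx x = 1 + 2 * xlnx x + 2 * xlnx (1 - x)"

definition Ctx :: "real \<Rightarrow> real \<Rightarrow> real" where
  "Ctx t x = Cx x + 2 * (if t < x then
      -1 + x + xlnx (1 - t) - xlnx (1 - x) - xlnx (x - t) else 0)"

end

theory Submission
  imports Defs "HOL-Real_Asymp.Real_Asymp"
begin

text \<open>
  Since \<open>H\<^sub>m = ln m + \<gamma> + O(1/m)\<close>, we have \<open>(m/n) H\<^sub>m = (m/n)(ln n + \<gamma>) + (m/n) ln (m/n) + O(1/n)\<close>
  uniformly in \<open>m\<close>. Consequently, if \<open>p/n \<rightarrow> u\<close> and \<open>q/n \<rightarrow> w\<close>, then \<open>a(p,q)/n\<close> minus the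
  divergent term \<open>2(q-1)(ln n + \<gamma>)/n\<close> tends to \<open>2u + 2u ln u - 2(u-w) ln (u-w) - 6w\<close>.
  In \<open>C(n,l,i)\<close> the divergent terms cancel up to \<open>O(ln n / n)\<close>; for \<open>l < i\<close> it combines two
  values of \<open>a\<close>, for \<open>l > i\<close> three, and the limits add up to \<open>C(t,x)\<close>.
\<close>

lemma H_eq_harm: "H = harm"
  by (rule ext) (simp add: H_def harm_def divide_inverse)

lemma xlnx_0 [simp]: "xlnx 0 = 0" and xlnx_1 [simp]: "xlnx 1 = 0"
  by (simp_all add: xlnx_def)

lemma continuous_on_xlnx: "continuous_on {0..} xlnx"
  unfolding continuous_on_eq_continuous_within
proof (intro ballI)
  fix y :: real assume "y \<in> {0..}"
  show "continuous (at y within {0..}) xlnx"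
  proof (cases "y = 0")
    case True
    have "((\<lambda>x::real. x * ln x) \<longlongrightarrow> 0) (at_right 0)" by real_asymp
    moreover have "eventually (\<lambda>x::real. x * ln x = xlnx x) (at_right 0)"
      using eventually_at_right_less[of 0] by eventually_elim (auto simp: xlnx_def)
    ultimately have "(xlnx \<longlongrightarrow> 0) (at_right 0)" using tendsto_cong by fastforce
    then show ?thesis using True by (simp add: continuous_within at_within_Ici_at_right xlnx_def)
  next
    case False
    then have "y > 0" using \<open>y \<in> {0..}\<close> by auto
    have "eventually (\<lambda>x. xlnx x = x * ln x) (nhds y)"
      using eventually_nhds_in_open[of "{0<..}" y] \<open>y > 0\<close>
      by (auto elim!: eventually_mono simp: xlnx_def)
    moreover have "isCont (\<lambda>x. x * ln x) y" using \<open>y > 0\<close> by (intro continuous_intros) auto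
    ultimately have "isCont xlnx y" using isCont_cong by metis
    then show ?thesis using continuous_at_imp_continuous_within by blast
  qed
qed

lemma tendsto_xlnx:
  assumes "(f \<longlongrightarrow> u) F" "eventually (\<lambda>n. f n \<ge> 0) F" "u \<ge> 0"
  shows "((\<lambda>n. xlnx (f n)) \<longlongrightarrow> xlnx u) F"
  using continuous_on_tendsto_compose[OF continuous_on_xlnx assms(1)] assms(2,3) by auto

lemma euler_mascheroni_le_harm_minus_ln:
  "m > 0 \<Longrightarrow> euler_mascheroni \<le> harm m - ln (real m)"
  by (rule LIMSEQ_le_const2[OF euler_mascheroni_LIMSEQ])
     (use euler_mascheroni_sequence_decreasing in blast)

lemma incseq_harm_minus_ln_Suc: "incseq (\<lambda>m. harm m - ln (real m + 1) :: real)"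
proof (rule incseq_SucI)
  fix m
  have "ln (real (Suc m) + 1) - ln (real (Suc m)) < 1 / real (Suc m)"
    by (rule ln_diff_le_inverse) auto
  then show "harm m - ln (real m + 1) \<le> harm (Suc m) - ln (real (Suc m) + 1)"
    by (simp add: harm_Suc field_simps add_ac)
qed

lemma harm_minus_ln_Suc_le_euler_mascheroni: "harm m - ln (real m + 1) \<le> euler_mascheroni"
proof (rule LIMSEQ_le_const[OF euler_mascheroni_LIMSEQ], intro exI allI impI)
  fix k assume "k \<ge> Suc m"
  then have "harm m - ln (real m + 1) \<le> harm k - ln (real k + 1)"
    by (intro incseqD[OF incseq_harm_minus_ln_Suc]) simp
  also have "\<dots> \<le> harm k - ln (real k)" using \<open>k \<ge> Suc m\<close> by simp
  finally show "harm m - ln (real m + 1) \<le> harm k - ln (real k)" .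
qed

definition harm_error :: "nat \<Rightarrow> nat \<Rightarrow> real" where
  "harm_error n m = real m / real n * (harm m - ln (real n) - euler_mascheroni) - xlnx (real m / real n)"

lemma abs_harm_error_le:
  assumes "n > 0" shows "\<bar>harm_error n m\<bar> \<le> 1 / real n"
proof (cases "m = 0")
  case True then show ?thesis by (simp add: harm_error_def xlnx_def)
next
  case False
  have eq: "harm_error n m = real m / real n * (harm m - ln (real m) - euler_mascheroni)"
    using False assms by (simp add: harm_error_def xlnx_def ln_div field_simps)
  have lower: "0 \<le> harm m - ln (real m) - euler_mascheroni"
    using euler_mascheroni_le_harm_minus_ln[of m] False by simp
  have "ln (real m + 1) - ln (real m) < 1 / real m"
    by (rule ln_diff_le_inverse) (use False in simp)
  then have upper: "harm m - ln (real m) - euler_mascheroni \<le> 1 / real m"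
    using harm_minus_ln_Suc_le_euler_mascheroni[of m] by simp
  have "\<bar>harm_error n m\<bar> = real m / real n * (harm m - ln (real m) - euler_mascheroni)"
    unfolding eq using lower by simp
  also have "\<dots> \<le> real m / real n * (1 / real m)"
    using upper by (intro mult_left_mono) auto
  also have "\<dots> = 1 / real n" using False by simp
  finally show ?thesis .
qed

lemma harm_error_tendsto_0: "(\<lambda>n. harm_error n (m n)) \<longlonglongrightarrow> 0"
proof (rule Lim_null_comparison)
  show "\<forall>\<^sub>F n in sequentially. norm (harm_error n (m n)) \<le> 1 / real n"
    using eventually_gt_at_top[of 0] by eventually_elim (simp add: abs_harm_error_le)
  show "(\<lambda>n. 1 / real n) \<longlonglongrightarrow> 0" by real_asymp
qed

lemma harm_over_n_tendsto_0:
  assumes "eventually (\<lambda>n. m n \<le> n + 1) sequentially"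
  shows "(\<lambda>n. harm (m n) / real n :: real) \<longlonglongrightarrow> 0"
proof (rule Lim_null_comparison)
  show "\<forall>\<^sub>F n in sequentially. norm (harm (m n) / real n :: real) \<le> harm (n + 1) / real n"
    using assms by eventually_elim (simp add: divide_right_mono harm_mono)
  have "(\<lambda>n. (harm (n + 1) - ln (real (n + 1))) * (1 / real n) + ln (real (n + 1)) / real n)
          \<longlonglongrightarrow> euler_mascheroni * 0 + 0"
    by (intro tendsto_intros LIMSEQ_ignore_initial_segment[OF euler_mascheroni_LIMSEQ]) real_asymp+
  then show "(\<lambda>n. harm (n + 1) / real n :: real) \<longlonglongrightarrow> 0"
    by (simp add: diff_divide_distrib)
qed

definition qa_renorm :: "nat \<Rightarrow> nat \<Rightarrow> nat \<Rightarrow> real" where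
  "qa_renorm n p q = (qa p q - 2 * (real q - 1) * (ln (real n) + euler_mascheroni)) / real n"

lemma qa_renorm_eq:
  assumes "q \<le> p" "q = 0 \<longrightarrow> p = 0" "n > 0"
  shows "qa_renorm n p q = 2 * real p / real n + 2 * xlnx (real p / real n)
           - 2 * xlnx (real (p + 1 - q) / real n) - 6 * real q / real n
           + 2 * harm_error n p - 2 * harm_error n (p + 1 - q)
           + (2 * harm p - 4 * harm (p + 1 - q) + 6) / real n"
proof -
  define r where "r = p + 1 - q"
  have q: "real q = real p + 1 - real r" using assms by (simp add: r_def of_nat_diff)
  have qa: "qa p q = 2 * real p + 2 * (real p + 1) * harm p - 2 * (real r + 2) * harm r - 6 * real q + 6"
    using assms by (auto simp: qa_def r_def of_nat_diff H_eq_harm harm_def)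
  show ?thesis
    using assms(3) unfolding r_def[symmetric] qa_renorm_def harm_error_def qa q
    by (simp add: field_simps)
qed

lemma tendsto_qa_renorm:
  assumes ev: "eventually (\<lambda>n. q n \<le> p n \<and> p n \<le> n \<and> (q n = 0 \<longrightarrow> p n = 0)) sequentially"
    and p: "(\<lambda>n. real (p n) / real n) \<longlonglongrightarrow> u"
    and q: "(\<lambda>n. real (q n) / real n) \<longlonglongrightarrow> w"
  shows "(\<lambda>n. qa_renorm n (p n) (q n)) \<longlonglongrightarrow> 2 * u + 2 * xlnx u - 2 * xlnx (u - w) - 6 * w"
proof -
  define r where "r n = p n + 1 - q n" for n
  have inv: "(\<lambda>n. 1 / real n) \<longlonglongrightarrow> 0" by real_asymp
  have r: "(\<lambda>n. real (r n) / real n) \<longlonglongrightarrow> u - w"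
  proof (rule Lim_transform_eventually)
    show "(\<lambda>n. real (p n) / real n + 1 / real n - real (q n) / real n) \<longlonglongrightarrow> u - w"
      using tendsto_diff[OF tendsto_add[OF p inv] q] by simp
    show "\<forall>\<^sub>F n in sequentially. real (p n) / real n + 1 / real n - real (q n) / real n = real (r n) / real n"
      using ev by eventually_elim (simp add: r_def of_nat_diff add_divide_distrib diff_divide_distrib)
  qed
  have "u \<ge> 0" by (rule tendsto_lowerbound[OF p]) auto
  have "u - w \<ge> 0" by (rule tendsto_lowerbound[OF r]) auto
  have xlnx_p: "(\<lambda>n. xlnx (real (p n) / real n)) \<longlonglongrightarrow> xlnx u"
    by (rule tendsto_xlnx[OF p _ \<open>u \<ge> 0\<close>]) auto
  have xlnx_r: "(\<lambda>n. xlnx (real (r n) / real n)) \<longlonglongrightarrow> xlnx (u - w)"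
    by (rule tendsto_xlnx[OF r _ \<open>u - w \<ge> 0\<close>]) auto
  have harm_p: "(\<lambda>n. harm (p n) / real n :: real) \<longlonglongrightarrow> 0"
    by (rule harm_over_n_tendsto_0) (use ev in \<open>auto elim: eventually_mono\<close>)
  have harm_r: "(\<lambda>n. harm (r n) / real n :: real) \<longlonglongrightarrow> 0"
    by (rule harm_over_n_tendsto_0) (use ev in \<open>auto simp: r_def elim: eventually_mono\<close>)
  have "(\<lambda>n. 2 * (real (p n) / real n) + 2 * xlnx (real (p n) / real n)
          - 2 * xlnx (real (r n) / real n) - 6 * (real (q n) / real n)
          + 2 * harm_error n (p n) - 2 * harm_error n (r n)
          + (2 * (harm (p n) / real n) - 4 * (harm (r n) / real n) + 6 * (1 / real n)))
        \<longlonglongrightarrow> 2 * u + 2 * xlnx u - 2 * xlnx (u - w) - 6 * w + 2 * 0 - 2 * 0 + (2 * 0 - 4 * 0 + 6 * 0)"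
    (is "(?f \<longlongrightarrow> _) _")
    by (intro tendsto_intros p q xlnx_p xlnx_r harm_error_tendsto_0 harm_p harm_r inv)
  then have "?f \<longlonglongrightarrow> 2 * u + 2 * xlnx u - 2 * xlnx (u - w) - 6 * w" by simp
  then show ?thesis
  proof (rule Lim_transform_eventually)
    show "\<forall>\<^sub>F n in sequentially. ?f n = qa_renorm n (p n) (q n)"
      using ev eventually_gt_at_top[of 0]
      by eventually_elim (simp add: qa_renorm_eq r_def add_divide_distrib diff_divide_distrib)
  qed
qed

lemma Cd_eq_qa_renorm:
  assumes "1 \<le> l" "l \<le> n" "1 \<le> i" "i \<le> n"
  shows "Cd n l i = (real n - 1) / real n - qa_renorm n n l
           + (if l < i then qa_renorm n (i - 1) l
              else qa_renorm n (i - 1) (i - 1) + qa_renorm n (n - i) (l - i)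
                   - 4 * (ln (real n) + euler_mascheroni) / real n)"
proof (cases "l < i")
  case True
  then show ?thesis
    using assms by (simp add: Cd_def qa_renorm_def of_nat_diff field_simps)
next
  case False
  then have "(if i < l then qa (n - i) (l - i) else 0) = qa (n - i) (l - i)"
    by (simp add: qa_def)
  then show ?thesis
    using False assms by (simp add: Cd_def qa_renorm_def of_nat_diff field_simps)
qed

lemma tendsto_of_nat_diff_over_n:
  assumes "eventually (\<lambda>n. b n \<le> a n) sequentially"
    and "(\<lambda>n. real (a n) / real n) \<longlonglongrightarrow> \<alpha>" "(\<lambda>n. real (b n) / real n) \<longlonglongrightarrow> \<beta>"
  shows "(\<lambda>n. real (a n - b n) / real n) \<longlonglongrightarrow> \<alpha> - \<beta>"
  by (rule Lim_transform_eventually[OF tendsto_diff[OF assms(2,3)]])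
     (use assms(1) in \<open>auto elim: eventually_mono simp: of_nat_diff diff_divide_distrib\<close>)

lemma tendsto_Cd_if_less:
  assumes ev: "eventually (\<lambda>n. 1 \<le> l n \<and> l n < i n \<and> i n \<le> n) sequentially"
    and l: "(\<lambda>n. real (l n) / real n) \<longlonglongrightarrow> t"
    and i: "(\<lambda>n. real (i n) / real n) \<longlonglongrightarrow> x"
  shows "(\<lambda>n. Cd n (l n) (i n))
           \<longlonglongrightarrow> -1 + 2 * x + 2 * xlnx x + 2 * xlnx (1 - t) - 2 * xlnx (x - t)"
proof -
  have n: "(\<lambda>n. real n / real n) \<longlonglongrightarrow> 1" by real_asymp
  have i1: "(\<lambda>n. real (i n - 1) / real n) \<longlonglongrightarrow> x - 0"
    by (rule tendsto_of_nat_diff_over_n) (use ev i in \<open>auto elim: eventually_mono\<close>, real_asymp)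
  have "(\<lambda>n. (real n - 1) / real n - qa_renorm n n (l n) + qa_renorm n (i n - 1) (l n))
          \<longlonglongrightarrow> 1 - (2 * 1 + 2 * xlnx 1 - 2 * xlnx (1 - t) - 6 * t)
               + (2 * (x - 0) + 2 * xlnx (x - 0) - 2 * xlnx (x - 0 - t) - 6 * t)"
    (is "(?f \<longlongrightarrow> _) _")
    by (intro tendsto_intros tendsto_qa_renorm n l i1)
       (use ev in \<open>auto elim: eventually_mono\<close>, real_asymp)
  then have "?f \<longlonglongrightarrow> -1 + 2 * x + 2 * xlnx x + 2 * xlnx (1 - t) - 2 * xlnx (x - t)"
    by (simp add: algebra_simps)
  then show ?thesis
    by (rule Lim_transform_eventually)
       (use ev in \<open>auto elim: eventually_mono simp: Cd_eq_qa_renorm\<close>)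
qed

lemma tendsto_Cd_if_greater:
  assumes ev: "eventually (\<lambda>n. 1 \<le> i n \<and> i n < l n \<and> l n \<le> n) sequentially"
    and l: "(\<lambda>n. real (l n) / real n) \<longlonglongrightarrow> t"
    and i: "(\<lambda>n. real (i n) / real n) \<longlonglongrightarrow> x"
  shows "(\<lambda>n. Cd n (l n) (i n)) \<longlonglongrightarrow> Cx x"
proof -
  have n: "(\<lambda>n. real n / real n) \<longlonglongrightarrow> 1" by real_asymp
  have i1: "(\<lambda>n. real (i n - 1) / real n) \<longlonglongrightarrow> x - 0"
    by (rule tendsto_of_nat_diff_over_n) (use ev i in \<open>auto elim: eventually_mono\<close>, real_asymp)
  have ni: "(\<lambda>n. real (n - i n) / real n) \<longlonglongrightarrow> 1 - x"
    by (rule tendsto_of_nat_diff_over_n[OF _ n i]) (use ev in \<open>auto elim: eventually_mono\<close>)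
  have li: "(\<lambda>n. real (l n - i n) / real n) \<longlonglongrightarrow> t - x"
    by (rule tendsto_of_nat_diff_over_n[OF _ l i]) (use ev in \<open>auto elim: eventually_mono\<close>)
  have log: "(\<lambda>n. 4 * (ln (real n) + euler_mascheroni) / real n) \<longlonglongrightarrow> 0"
    by real_asymp
  have "(\<lambda>n. (real n - 1) / real n - qa_renorm n n (l n)
             + (qa_renorm n (i n - 1) (i n - 1) + qa_renorm n (n - i n) (l n - i n)
                - 4 * (ln (real n) + euler_mascheroni) / real n))
          \<longlonglongrightarrow> 1 - (2 * 1 + 2 * xlnx 1 - 2 * xlnx (1 - t) - 6 * t)
               + (2 * (x - 0) + 2 * xlnx (x - 0) - 2 * xlnx (x - 0 - (x - 0)) - 6 * (x - 0)
                  + (2 * (1 - x) + 2 * xlnx (1 - x) - 2 * xlnx (1 - x - (t - x)) - 6 * (t - x))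
                  - 0)"
    (is "(?f \<longlongrightarrow> _) _")
    by (intro tendsto_intros tendsto_qa_renorm n l i1 ni li log)
       (real_asymp, use ev in \<open>auto elim: eventually_mono\<close>)
  then have "?f \<longlonglongrightarrow> Cx x"
    by (simp add: Cx_def algebra_simps)
  then show ?thesis
    by (rule Lim_transform_eventually)
       (use ev in \<open>auto elim: eventually_mono simp: Cd_eq_qa_renorm\<close>)
qed

lemma eventually_less_if_ratios_tendsto:
  assumes "(\<lambda>n. real (a n) / real n) \<longlonglongrightarrow> \<alpha>" "(\<lambda>n. real (b n) / real n) \<longlonglongrightarrow> \<beta>" "\<alpha> < \<beta>"
  shows "eventually (\<lambda>n. a n < b n) sequentially"
proof -
  have "eventually (\<lambda>n. real (a n) / real n < real (b n) / real n) sequentially"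
    using order_tendstoD(1)[OF tendsto_diff[OF assms(2,1)], of 0] assms(3) by simp
  then show ?thesis
    by eventually_elim (simp add: divide_less_cancel)
qed

theorem proposition5p5:
  fixes l i :: "nat \<Rightarrow> nat" and t x :: real
  assumes "\<And>n. n \<ge> 1 \<Longrightarrow> 1 \<le> l n \<and> l n \<le> n"
    and "\<And>n. n \<ge> 1 \<Longrightarrow> 1 \<le> i n \<and> i n \<le> n"
    and "(\<lambda>n. real (l n) / real n) \<longlonglongrightarrow> t"
    and "(\<lambda>n. real (i n) / real n) \<longlonglongrightarrow> x"
    and "0 < t" and "t \<le> 1" and "0 \<le> x" and "x \<le> 1" and "t \<noteq> x"
  shows "(\<lambda>n. Cd n (l n) (i n)) \<longlonglongrightarrow> Ctx t x"
proof -
  have bounds: "eventually (\<lambda>n. 1 \<le> l n \<and> l n \<le> n \<and> 1 \<le> i n \<and> i n \<le> n) sequentially"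
    using eventually_ge_at_top[of 1] by eventually_elim (use assms(1,2) in blast)
  show ?thesis
  proof (cases "t < x")
    case True
    have "eventually (\<lambda>n. l n < i n) sequentially"
      using eventually_less_if_ratios_tendsto[OF assms(3,4) True] .
    with bounds have "eventually (\<lambda>n. 1 \<le> l n \<and> l n < i n \<and> i n \<le> n) sequentially"
      by eventually_elim auto
    from tendsto_Cd_if_less[OF this assms(3,4)] True show ?thesis
      by (simp add: Ctx_def Cx_def algebra_simps)
  next
    case False
    then have "eventually (\<lambda>n. i n < l n) sequentially"
      using eventually_less_if_ratios_tendsto[OF assms(4,3)] assms(9) by simp
    with bounds have "eventually (\<lambda>n. 1 \<le> i n \<and> i n < l n \<and> l n \<le> n) sequentially"
      by eventually_elim auto
    from tendsto_Cd_if_greater[OF this assms(3,4)] False show ?thesis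
      by (simp add: Ctx_def)
  qed
qed

end
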